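(* Let $n\ge 2$ and $H\le\operatorname{Sym}(n)$. The set $V_n(H)$ of homeomorphisms of $\mathfrak{C}_n$ described by tables (as in the context) is a group under composition.
   Context: Let $\mathcal{A}_n=\{0,1,\dots,n-1\}$, let $\mathcal{A}_n^*$ be the set of finite words over $\mathcal{A}_n$ (including the empty word), and let $\mathfrak{C}_n=\mathcal{A}_n^{\mathbb{N}}$ (infinite words, product topology). For $u\in\mathcal{A}_n^*$ and $v$ a finite or infinite word, $uv$ denotes concatenation, and $u\le_{pref} v$ means $v=uw$ for some word $w$. A (complete) prefix code of $\mathfrak{C}_n$ is a finite set $S\subset\mathcal{A}_n^*$ such that every $\zeta\in\mathfrak{C}_n$ has exactly one $s\in S$ with $s\le_{pref}\zeta$. A permutation $\sigma\in\operatorname{Sym}(n)$ acts on words letterwise: $\sigma(z_1z_2\cdots)=\sigma(z_1)\sigma(z_2)\cdots$. A table consists of two prefix codes $P=\{p_1,\dots,p_k\}$ and $Q=\{q_1,\dots,q_k\}$ of $\mathfrak{C}_n$ of the same size $k\ge1$ together with $\sigma_i,\tau_i\in H$ ($1\le i\le k$); it describes the homeomorphism of $\mathfrak{C}_n$ sending $p_i\,\sigma_i(u)\mapsto q_i\,\tau_i(u)$ for all $u\in\mathfrak{C}_n$ and all $i$. *)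

theory Defs
  imports "HOL-Algebra.Bij" "HOL-Algebra.Group"
begin

text \<open>Finite words over A_n = {0,...,n-1} are nat lists; infinite words are
  functions nat => nat.\<close>

definition words :: "nat \<Rightarrow> nat list set" where
  "words n = {w. set w \<subseteq> {..<n}}"

definition cantor :: "nat \<Rightarrow> (nat \<Rightarrow> nat) set" where
  "cantor n = {z. \<forall>i. z i < n}"

definition cat :: "nat list \<Rightarrow> (nat \<Rightarrow> nat) \<Rightarrow> (nat \<Rightarrow> nat)" where
  "cat u z = (\<lambda>i. if i < length u then u ! i else z (i - length u))"

definition is_prefix :: "nat list \<Rightarrow> (nat \<Rightarrow> nat) \<Rightarrow> bool" where
  "is_prefix u z \<longleftrightarrow> (\<forall>i<length u. z i = u ! i)"

definition prefix_code :: "nat \<Rightarrow> nat list set \<Rightarrow> bool" where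
  "prefix_code n S \<longleftrightarrow> finite S \<and> S \<subseteq> words n \<and>
     (\<forall>z\<in>cantor n. \<exists>!s. s \<in> S \<and> is_prefix s z)"

text \<open>The homeomorphism f (an element of the bijection group of C_n, hence
  extensional on C_n) is described by a table with entries in H:
  P = {p 0..p (k-1)}, Q = {q 0..q (k-1)} prefix codes of size k, and
  f (p_i sigma_i(u)) = q_i tau_i(u). Permutations act letterwise: sigma o u.\<close>
definition described_by_table :: "nat \<Rightarrow> (nat \<Rightarrow> nat) set \<Rightarrow> ((nat \<Rightarrow> nat) \<Rightarrow> (nat \<Rightarrow> nat)) \<Rightarrow> bool" where
  "described_by_table n H f \<longleftrightarrow>
     f \<in> extensional (cantor n) \<and>
     (\<exists>(k::nat) (p::nat \<Rightarrow> nat list) (q::nat \<Rightarrow> nat list)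
        (\<sigma>::nat \<Rightarrow> nat \<Rightarrow> nat) (\<tau>::nat \<Rightarrow> nat \<Rightarrow> nat).
        k \<ge> 1 \<and>
        inj_on p {..<k} \<and> inj_on q {..<k} \<and>
        prefix_code n (p ` {..<k}) \<and> prefix_code n (q ` {..<k}) \<and>
        (\<forall>i<k. \<sigma> i \<in> H \<and> \<tau> i \<in> H) \<and>
        (\<forall>i<k. \<forall>u\<in>cantor n. f (cat (p i) (\<sigma> i \<circ> u)) = cat (q i) (\<tau> i \<circ> u)))"

definition V :: "nat \<Rightarrow> (nat \<Rightarrow> nat) set \<Rightarrow> ((nat \<Rightarrow> nat) \<Rightarrow> (nat \<Rightarrow> nat)) set" where
  "V n H = {f. described_by_table n H f}"

end

theory Submission
  imports Defs
begin

text \<open>A table can be refined until its domain code consists of all words of some fixed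
  length L and all \<sigma>_i are trivial: f (w u) = q_w (h_w u) for every word w of
  length L. Such depth-L descriptions compose (a depth-L one after a depth-M one gives depth
  L + M, since H is closed under products), and conversely a bijection of C_n with a
  depth-L description is given by a table, because bijectivity forces the words q_w to
  form a prefix code. The inverse of a table is obtained by exchanging P with Q and the
  \<sigma>_i with the \<tau>_i.\<close>

lemma carrier_BijGroup [simp]: "carrier (BijGroup S) = Bij S"
  by (simp add: BijGroup_def)

lemma BijGroup_mult: "a \<in> Bij S \<Longrightarrow> b \<in> Bij S \<Longrightarrow> a \<otimes>\<^bsub>BijGroup S\<^esub> b = compose S a b"
  by (simp add: BijGroup_def)

lemma BijGroup_one: "\<one>\<^bsub>BijGroup S\<^esub> = (\<lambda>x\<in>S. x)"
  by (simp add: BijGroup_def)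

lemma subgroup_BijGroup_subset: "subgroup H (BijGroup S) \<Longrightarrow> H \<subseteq> Bij S"
  using subgroup.subset by fastforce

lemma words_append [simp]: "a @ b \<in> words n \<longleftrightarrow> a \<in> words n \<and> b \<in> words n"
  by (auto simp: words_def)

lemma words_take: "w \<in> words n \<Longrightarrow> take m w \<in> words n"
  by (auto simp: words_def dest: in_set_takeD)

lemma words_drop: "w \<in> words n \<Longrightarrow> drop m w \<in> words n"
  by (auto simp: words_def dest: in_set_dropD)

lemma cat_Nil [simp]: "cat [] u = u"
  by (simp add: cat_def)

lemma cat_append: "cat (v @ w) u = cat v (cat w u)"
  by (auto simp: cat_def nth_append fun_eq_iff)

lemma comp_cat: "h \<circ> cat w u = cat (map h w) (h \<circ> u)"
  by (auto simp: cat_def fun_eq_iff)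

lemma cat_in_cantor: "w \<in> words n \<Longrightarrow> u \<in> cantor n \<Longrightarrow> cat w u \<in> cantor n"
  by (auto simp: cat_def cantor_def words_def dest!: nth_mem)

lemma cat_eq_cat_iff:
  assumes "length w = length w'"
  shows "cat w u = cat w' u' \<longleftrightarrow> w = w' \<and> u = u'"
proof
  assume eq: "cat w u = cat w' u'"
  have "w ! i = w' ! i" if "i < length w" for i
    using fun_cong[OF eq, of i] that assms by (simp add: cat_def)
  then have "w = w'"
    using assms by (simp add: nth_equalityI)
  moreover have "u j = u' j" for j
    using fun_cong[OF eq, of "j + length w"] assms by (simp add: cat_def)
  ultimately show "w = w' \<and> u = u'"
    by auto
qed simp

lemma is_prefix_cat [simp]: "is_prefix w (cat w u)"
  by (simp add: is_prefix_def cat_def)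

lemma is_prefixE:
  assumes "is_prefix w z" "z \<in> cantor n"
  obtains u where "u \<in> cantor n" "z = cat w u"
proof
  show "(\<lambda>j. z (j + length w)) \<in> cantor n"
    using assms(2) by (simp add: cantor_def)
  show "z = cat w (\<lambda>j. z (j + length w))"
    using assms(1) by (auto simp: is_prefix_def cat_def fun_eq_iff)
qed

lemma is_prefix_cat_imp_append:
  assumes "is_prefix w (cat v u)" "length w \<le> length v"
  shows "v = w @ drop (length w) v"
proof -
  have "take (length w) v = w"
    using assms by (intro nth_equalityI) (auto simp: is_prefix_def cat_def)
  then show ?thesis
    by (metis append_take_drop_id)
qed

lemma is_prefix_comparable:
  assumes "is_prefix v z" "is_prefix w z"
  shows "(\<exists>x. w = v @ x) \<or> (\<exists>x. v = w @ x)"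
proof -
  have "z = cat v (\<lambda>j. z (j + length v))" "z = cat w (\<lambda>j. z (j + length w))"
    using assms by (auto simp: is_prefix_def cat_def fun_eq_iff)
  then show ?thesis
    using assms is_prefix_cat_imp_append nat_le_linear by metis
qed

lemma Bij_comp_cantor: "h \<in> Bij {..<n} \<Longrightarrow> u \<in> cantor n \<Longrightarrow> h \<circ> u \<in> cantor n"
  using Bij_imp_funcset by (fastforce simp: cantor_def)

lemma Bij_map_words: "h \<in> Bij {..<n} \<Longrightarrow> w \<in> words n \<Longrightarrow> map h w \<in> words n"
  using Bij_imp_funcset by (fastforce simp: words_def)

lemma BijGroup_mult_comp:
  "a \<in> Bij {..<n} \<Longrightarrow> b \<in> Bij {..<n} \<Longrightarrow> u \<in> cantor n \<Longrightarrow>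
    (a \<otimes>\<^bsub>BijGroup {..<n}\<^esub> b) \<circ> u = a \<circ> (b \<circ> u)"
  by (auto simp: BijGroup_mult compose_def cantor_def fun_eq_iff)

lemma BijGroup_one_comp: "u \<in> cantor n \<Longrightarrow> \<one>\<^bsub>BijGroup {..<n}\<^esub> \<circ> u = u"
  by (auto simp: BijGroup_one cantor_def fun_eq_iff)

lemma inv_BijGroup_closed: "h \<in> Bij S \<Longrightarrow> inv\<^bsub>BijGroup S\<^esub> h \<in> Bij S"
  using group.inv_closed[OF group_BijGroup] by fastforce

lemma BijGroup_comp_inv_comp:
  assumes "h \<in> Bij {..<n}" "u \<in> cantor n"
  shows "h \<circ> (inv\<^bsub>BijGroup {..<n}\<^esub> h \<circ> u) = u"
    and "inv\<^bsub>BijGroup {..<n}\<^esub> h \<circ> (h \<circ> u) = u"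
  using assms inv_BijGroup_closed[of h "{..<n}"]
  by (simp_all flip: BijGroup_mult_comp add: group.r_inv[OF group_BijGroup]
      group.l_inv[OF group_BijGroup] BijGroup_one_comp)

definition words_of_length :: "nat \<Rightarrow> nat \<Rightarrow> nat list set" where
  "words_of_length n L = {w \<in> words n. length w = L}"

lemma finite_words_of_length: "finite (words_of_length n L)"
proof -
  have "words_of_length n L = {w. set w \<subseteq> {..<n} \<and> length w = L}"
    by (auto simp: words_of_length_def words_def)
  then show ?thesis
    by (simp add: finite_lists_length_eq)
qed

lemma take_in_words_of_length: "z \<in> cantor n \<Longrightarrow> map z [0..<L] \<in> words_of_length n L"
  by (auto simp: words_of_length_def words_def cantor_def)

lemma is_prefix_take: "is_prefix (map z [0..<L]) z"
  by (simp add: is_prefix_def)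

lemma prefix_code_words_of_length: "prefix_code n (words_of_length n L)"
  unfolding prefix_code_def
proof (intro conjI ballI)
  fix z assume "z \<in> cantor n"
  show "\<exists>!w. w \<in> words_of_length n L \<and> is_prefix w z"
  proof (rule ex1I)
    show "map z [0..<L] \<in> words_of_length n L \<and> is_prefix (map z [0..<L]) z"
      using \<open>z \<in> cantor n\<close> by (simp add: take_in_words_of_length is_prefix_take)
    fix w assume "w \<in> words_of_length n L \<and> is_prefix w z"
    then show "w = map z [0..<L]"
      by (intro nth_equalityI) (auto simp: words_of_length_def is_prefix_def)
  qed
qed (use finite_words_of_length in \<open>auto simp: words_of_length_def\<close>)

lemma prefix_code_words: "prefix_code n (p ` {..<k}) \<Longrightarrow> i < k \<Longrightarrow> p i \<in> words n"
  unfolding prefix_code_def by blast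

lemma prefix_code_prefixE:
  assumes "prefix_code n (p ` {..<k})" "z \<in> cantor n"
  obtains i where "i < k" "is_prefix (p i) z"
  using assms unfolding prefix_code_def by blast

lemma prefix_code_catE:
  assumes "prefix_code n (p ` {..<k})" "z \<in> cantor n"
  obtains i v where "i < k" "v \<in> cantor n" "z = cat (p i) v"
  using assms by (metis prefix_code_prefixE is_prefixE)

lemma prefix_code_index_unique:
  assumes "prefix_code n (p ` {..<k})" "inj_on p {..<k}" "z \<in> cantor n"
    and "i < k" "j < k" "is_prefix (p i) z" "is_prefix (p j) z"
  shows "i = j"
proof -
  have "p i = p j"
    using assms unfolding prefix_code_def by blast
  then show ?thesis
    using assms(2,4,5) by (auto dest: inj_onD)
qed

lemma described_by_tableE:
  assumes "described_by_table n H f"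
  obtains k :: nat and p q \<sigma> \<tau> where "k \<ge> 1" "inj_on p {..<k}" "inj_on q {..<k}"
    "prefix_code n (p ` {..<k})" "prefix_code n (q ` {..<k})"
    "\<forall>i<k. \<sigma> i \<in> H \<and> \<tau> i \<in> H"
    "\<forall>i<k. \<forall>u\<in>cantor n. f (cat (p i) (\<sigma> i \<circ> u)) = cat (q i) (\<tau> i \<circ> u)"
  using assms unfolding described_by_table_def by auto

lemma described_by_tableI:
  fixes k :: nat
  assumes "f \<in> extensional (cantor n)" "k \<ge> 1" "inj_on p {..<k}" "inj_on q {..<k}"
    "prefix_code n (p ` {..<k})" "prefix_code n (q ` {..<k})"
    "\<forall>i<k. \<sigma> i \<in> H \<and> \<tau> i \<in> H"
    "\<forall>i<k. \<forall>u\<in>cantor n. f (cat (p i) (\<sigma> i \<circ> u)) = cat (q i) (\<tau> i \<circ> u)"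
  shows "described_by_table n H f"
  unfolding described_by_table_def using assms by blast

lemma described_by_table_normalE:
  assumes H: "subgroup H (BijGroup {..<n})" and f: "described_by_table n H f"
  obtains k :: nat and p q g where "inj_on p {..<k}" "inj_on q {..<k}"
    "prefix_code n (p ` {..<k})" "prefix_code n (q ` {..<k})" "\<forall>i<k. g i \<in> H"
    "\<forall>i<k. \<forall>v\<in>cantor n. f (cat (p i) v) = cat (q i) (g i \<circ> v)"
proof -
  let ?G = "BijGroup {..<n}"
  obtain k :: nat and p q \<sigma> \<tau> where codes: "inj_on p {..<k}" "inj_on q {..<k}"
      "prefix_code n (p ` {..<k})" "prefix_code n (q ` {..<k})"
    and \<sigma>\<tau>: "\<forall>i<k. \<sigma> i \<in> H \<and> \<tau> i \<in> H"
    and rows: "\<forall>i<k. \<forall>u\<in>cantor n. f (cat (p i) (\<sigma> i \<circ> u)) = cat (q i) (\<tau> i \<circ> u)"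
    using f by (elim described_by_tableE) auto
  have HB: "H \<subseteq> Bij {..<n}"
    using H by (rule subgroup_BijGroup_subset)
  define g where "g i = \<tau> i \<otimes>\<^bsub>?G\<^esub> inv\<^bsub>?G\<^esub> \<sigma> i" for i
  have "g i \<in> H" if "i < k" for i
    unfolding g_def using \<sigma>\<tau> that by (auto intro: subgroup.m_closed[OF H] subgroup.m_inv_closed[OF H])
  moreover have "f (cat (p i) v) = cat (q i) (g i \<circ> v)" if "i < k" "v \<in> cantor n" for i v
  proof -
    have \<sigma>: "\<sigma> i \<in> Bij {..<n}" and \<tau>: "\<tau> i \<in> Bij {..<n}" and \<sigma>':  "inv\<^bsub>?G\<^esub> \<sigma> i \<in> Bij {..<n}"
      using \<sigma>\<tau> HB that inv_BijGroup_closed by blast+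
    have "f (cat (p i) v) = f (cat (p i) (\<sigma> i \<circ> (inv\<^bsub>?G\<^esub> \<sigma> i \<circ> v)))"
      using \<sigma> that by (simp add: BijGroup_comp_inv_comp)
    also have "\<dots> = cat (q i) (\<tau> i \<circ> (inv\<^bsub>?G\<^esub> \<sigma> i \<circ> v))"
      using rows that \<sigma>' by (simp add: Bij_comp_cantor)
    also have "\<dots> = cat (q i) (g i \<circ> v)"
      using \<tau> \<sigma>' that by (simp add: g_def BijGroup_mult_comp)
    finally show ?thesis .
  qed
  ultimately show thesis
    by (intro that[OF codes]) auto
qed

lemma normal_table_image:
  assumes codes: "prefix_code n (p ` {..<k})" "prefix_code n (q ` {..<k})"
    and g: "\<forall>i<k. g i \<in> Bij {..<n}"
    and rows: "\<forall>i<k. \<forall>v\<in>cantor n. f (cat (p i) v) = cat (q i) (g i \<circ> v)"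
  shows "f ` cantor n = cantor n"
proof
  show "f ` cantor n \<subseteq> cantor n"
  proof
    fix y assume "y \<in> f ` cantor n"
    then obtain z where "z \<in> cantor n" "y = f z"
      by blast
    then obtain i v where "i < k" "v \<in> cantor n" "y = cat (q i) (g i \<circ> v)"
      using codes(1) rows by (metis prefix_code_catE)
    then show "y \<in> cantor n"
      using prefix_code_words[OF codes(2)] g by (simp add: cat_in_cantor Bij_comp_cantor)
  qed
  show "cantor n \<subseteq> f ` cantor n"
  proof
    fix y assume "y \<in> cantor n"
    with codes(2) obtain i t where i: "i < k" and t: "t \<in> cantor n" "y = cat (q i) t"
      by (rule prefix_code_catE)
    let ?v = "inv\<^bsub>BijGroup {..<n}\<^esub> g i \<circ> t"
    have v: "?v \<in> cantor n"
      using g i t by (simp add: Bij_comp_cantor inv_BijGroup_closed)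
    then have "y = f (cat (p i) ?v)"
      using rows g i t by (simp add: BijGroup_comp_inv_comp)
    moreover have "cat (p i) ?v \<in> cantor n"
      using prefix_code_words[OF codes(1) i] v by (rule cat_in_cantor)
    ultimately show "y \<in> f ` cantor n"
      by blast
  qed
qed

lemma normal_table_inj_on:
  assumes codes: "prefix_code n (p ` {..<k})" "prefix_code n (q ` {..<k})"
    and inj: "inj_on q {..<k}" and g: "\<forall>i<k. g i \<in> Bij {..<n}"
    and rows: "\<forall>i<k. \<forall>v\<in>cantor n. f (cat (p i) v) = cat (q i) (g i \<circ> v)"
  shows "inj_on f (cantor n)"
proof (rule inj_onI)
  fix z z' assume "z \<in> cantor n" "z' \<in> cantor n" and eq: "f z = f z'"
  obtain i v where i: "i < k" "v \<in> cantor n" "z = cat (p i) v"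
    using codes(1) \<open>z \<in> cantor n\<close> by (rule prefix_code_catE)
  obtain j v' where j: "j < k" "v' \<in> cantor n" "z' = cat (p j) v'"
    using codes(1) \<open>z' \<in> cantor n\<close> by (rule prefix_code_catE)
  have fz: "f z = cat (q i) (g i \<circ> v)" "f z = cat (q j) (g j \<circ> v')"
    using rows i j eq by auto
  moreover have "f z \<in> cantor n"
    using fz(1) prefix_code_words[OF codes(2) i(1)] g i(1,2) by (simp add: cat_in_cantor Bij_comp_cantor)
  ultimately have "i = j"
    using prefix_code_index_unique[OF codes(2) inj _ i(1) j(1)] is_prefix_cat by metis
  then have "g i \<circ> v = g i \<circ> v'"
    using fz cat_eq_cat_iff by simp
  then have "v = v'"
    using BijGroup_comp_inv_comp(2) g i(1,2) j(2) by metis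
  then show "z = z'"
    using i j \<open>i = j\<close> by simp
qed

lemma described_by_table_Bij:
  assumes H: "subgroup H (BijGroup {..<n})" and f: "described_by_table n H f"
  shows "f \<in> Bij (cantor n)"
proof -
  obtain k :: nat and p q g where "inj_on q {..<k}"
    and "prefix_code n (p ` {..<k})" "prefix_code n (q ` {..<k})" and gH: "\<forall>i<k. g i \<in> H"
    and "\<forall>i<k. \<forall>v\<in>cantor n. f (cat (p i) v) = cat (q i) (g i \<circ> v)"
    using H f by (rule described_by_table_normalE)
  moreover have "\<forall>i<k. g i \<in> Bij {..<n}"
    using gH subgroup_BijGroup_subset[OF H] by blast
  ultimately have "f ` cantor n = cantor n" "inj_on f (cantor n)"
    by (simp_all add: normal_table_image normal_table_inj_on)
  moreover have "f \<in> extensional (cantor n)"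
    using f by (simp add: described_by_table_def)
  ultimately show ?thesis
    by (simp add: Bij_def bij_betw_def)
qed

lemma described_by_table_inverse:
  assumes H: "H \<subseteq> Bij {..<n}" and fB: "f \<in> Bij (cantor n)" and f: "described_by_table n H f"
  shows "described_by_table n H (\<lambda>x\<in>cantor n. inv_into (cantor n) f x)"
proof -
  obtain k :: nat and p q \<sigma> \<tau> where k: "k \<ge> 1" and codes: "inj_on p {..<k}" "inj_on q {..<k}"
      "prefix_code n (p ` {..<k})" "prefix_code n (q ` {..<k})"
    and \<sigma>\<tau>: "\<forall>i<k. \<sigma> i \<in> H \<and> \<tau> i \<in> H"
    and rows: "\<forall>i<k. \<forall>u\<in>cantor n. f (cat (p i) (\<sigma> i \<circ> u)) = cat (q i) (\<tau> i \<circ> u)"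
    using f by (rule described_by_tableE)
  have "(\<lambda>x\<in>cantor n. inv_into (cantor n) f x) (cat (q i) (\<tau> i \<circ> u)) = cat (p i) (\<sigma> i \<circ> u)"
    if "i < k" "u \<in> cantor n" for i u
  proof -
    have "\<sigma> i \<in> Bij {..<n}" "\<tau> i \<in> Bij {..<n}"
      using that \<sigma>\<tau> H by auto
    then have in_cantor: "cat (p i) (\<sigma> i \<circ> u) \<in> cantor n" "cat (q i) (\<tau> i \<circ> u) \<in> cantor n"
      using that prefix_code_words[OF codes(3) that(1)] prefix_code_words[OF codes(4) that(1)]
      by (simp_all add: cat_in_cantor Bij_comp_cantor)
    have "inv_into (cantor n) f (f (cat (p i) (\<sigma> i \<circ> u))) = cat (p i) (\<sigma> i \<circ> u)"
      using fB in_cantor(1) by (simp add: Bij_def bij_betw_def inv_into_f_f)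
    then show ?thesis
      using in_cantor(2) rows that by simp
  qed
  then show ?thesis
    using k codes \<sigma>\<tau> by (intro described_by_tableI[where p = q and q = p and \<sigma> = \<tau> and \<tau> = \<sigma>] restrict_extensional) blast+
qed

definition table_at_depth ::
    "nat \<Rightarrow> (nat \<Rightarrow> nat) set \<Rightarrow> ((nat \<Rightarrow> nat) \<Rightarrow> (nat \<Rightarrow> nat)) \<Rightarrow> nat \<Rightarrow> bool" where
  "table_at_depth n H f L \<longleftrightarrow> (\<forall>w\<in>words_of_length n L. \<exists>q h. q \<in> words n \<and> h \<in> H \<and>
      (\<forall>u\<in>cantor n. f (cat w u) = cat q (h \<circ> u)))"

lemma cat_append_row:
  assumes "\<forall>u\<in>cantor n. f (cat w u) = cat q (h \<circ> u)" and "x \<in> words n"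
  shows "\<forall>u\<in>cantor n. f (cat (w @ x) u) = cat (q @ map h x) (h \<circ> u)"
  using assms by (simp add: cat_append comp_cat cat_in_cantor)

lemma described_by_table_at_depth:
  assumes n: "0 < n" and H: "subgroup H (BijGroup {..<n})" and f: "described_by_table n H f"
  shows "\<exists>L. table_at_depth n H f L"
proof -
  obtain k :: nat and p q g where codes: "prefix_code n (p ` {..<k})" "prefix_code n (q ` {..<k})"
    and g: "\<forall>i<k. g i \<in> H"
    and rows: "\<forall>i<k. \<forall>v\<in>cantor n. f (cat (p i) v) = cat (q i) (g i \<circ> v)"
    using H f by (elim described_by_table_normalE) blast
  define L where "L = Max (length ` p ` {..<k})"
  have "table_at_depth n H f L"
    unfolding table_at_depth_def
  proof
    fix w assume w: "w \<in> words_of_length n L"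
    have "cat w (\<lambda>_. 0) \<in> cantor n"
      using w n by (intro cat_in_cantor) (auto simp: cantor_def words_of_length_def)
    with codes(1) obtain i where i: "i < k" "is_prefix (p i) (cat w (\<lambda>_. 0))"
      by (rule prefix_code_prefixE)
    have "length (p i) \<le> length w"
      using i(1) w unfolding L_def words_of_length_def by (auto intro: Max_ge)
    then obtain x where wx: "w = p i @ x"
      using is_prefix_cat_imp_append[OF i(2)] by blast
    have x: "x \<in> words n"
      using w wx by (simp add: words_of_length_def)
    have gB: "g i \<in> Bij {..<n}"
      using g i(1) subgroup_BijGroup_subset[OF H] by blast
    have "\<forall>u\<in>cantor n. f (cat w u) = cat (q i @ map (g i) x) (g i \<circ> u)"
      using cat_append_row[of n f "p i" "q i" "g i" x] rows i(1) x by (simp add: wx)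
    moreover have "q i @ map (g i) x \<in> words n"
      using prefix_code_words[OF codes(2) i(1)] Bij_map_words[OF gB x] by simp
    ultimately show "\<exists>q h. q \<in> words n \<and> h \<in> H \<and> (\<forall>u\<in>cantor n. f (cat w u) = cat q (h \<circ> u))"
      using g i(1) by blast
  qed
  then show ?thesis
    by blast
qed

lemma table_at_depth_id:
  assumes H: "subgroup H (BijGroup {..<n})"
  shows "table_at_depth n H (\<lambda>x\<in>cantor n. x) 0"
  unfolding table_at_depth_def
proof
  fix w assume "w \<in> words_of_length n 0"
  then have "w = []"
    by (simp add: words_of_length_def)
  moreover have "\<one>\<^bsub>BijGroup {..<n}\<^esub> \<in> H"
    using H by (rule subgroup.one_closed)
  ultimately show "\<exists>q h. q \<in> words n \<and> h \<in> H \<and> (\<forall>u\<in>cantor n. (\<lambda>x\<in>cantor n. x) (cat w u) = cat q (h \<circ> u))"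
    by (intro exI[of _ "[]"] exI[of _ "\<one>\<^bsub>BijGroup {..<n}\<^esub>"]) (simp add: words_def BijGroup_one_comp)
qed

lemma table_at_depth_compose:
  assumes H: "subgroup H (BijGroup {..<n})"
    and f: "table_at_depth n H f L" and g: "table_at_depth n H g M"
  shows "table_at_depth n H (compose (cantor n) g f) (L + M)"
  unfolding table_at_depth_def
proof
  have HB: "H \<subseteq> Bij {..<n}"
    using H by (rule subgroup_BijGroup_subset)
  fix w assume w: "w \<in> words_of_length n (L + M)"
  have "take L w \<in> words_of_length n L" and x: "drop L w \<in> words n" "length (drop L w) = M"
    using w unfolding words_of_length_def by (auto intro: words_take words_drop)
  then obtain q1 h1 where q1: "q1 \<in> words n" and h1: "h1 \<in> H"
    and f_w1: "\<forall>u\<in>cantor n. f (cat (take L w) u) = cat q1 (h1 \<circ> u)"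
    using f unfolding table_at_depth_def by blast
  define y where "y = q1 @ map h1 (drop L w)"
  have f_w: "\<forall>u\<in>cantor n. f (cat w u) = cat y (h1 \<circ> u)"
    using cat_append_row[OF f_w1 x(1)] by (simp add: y_def)
  have y: "y \<in> words n" "M \<le> length y"
    using q1 Bij_map_words[OF _ x(1), of h1] h1 HB x(2) by (auto simp: y_def)
  then have "take M y \<in> words_of_length n M" and r: "drop M y \<in> words n"
    by (auto simp: words_of_length_def intro: words_take words_drop)
  then obtain q2 h2 where q2: "q2 \<in> words n" and h2: "h2 \<in> H"
    and g_w2: "\<forall>u\<in>cantor n. g (cat (take M y) u) = cat q2 (h2 \<circ> u)"
    using g unfolding table_at_depth_def by blast
  have g_y: "\<forall>t\<in>cantor n. g (cat y t) = cat (q2 @ map h2 (drop M y)) (h2 \<circ> t)"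
    using cat_append_row[OF g_w2 r] by simp
  have hB: "h1 \<in> Bij {..<n}" "h2 \<in> Bij {..<n}"
    using h1 h2 HB by auto
  show "\<exists>q h. q \<in> words n \<and> h \<in> H \<and>
      (\<forall>u\<in>cantor n. compose (cantor n) g f (cat w u) = cat q (h \<circ> u))"
  proof (intro exI conjI ballI)
    show "q2 @ map h2 (drop M y) \<in> words n"
      using q2 Bij_map_words[OF hB(2) r] by simp
    show "h2 \<otimes>\<^bsub>BijGroup {..<n}\<^esub> h1 \<in> H"
      using h2 h1 by (rule subgroup.m_closed[OF H])
    fix u assume u: "u \<in> cantor n"
    have "compose (cantor n) g f (cat w u) = g (cat y (h1 \<circ> u))"
      using w u f_w by (simp add: compose_def cat_in_cantor words_of_length_def)
    also have "\<dots> = cat (q2 @ map h2 (drop M y)) (h2 \<circ> (h1 \<circ> u))"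
      using g_y hB(1) u by (simp add: Bij_comp_cantor)
    also have "h2 \<circ> (h1 \<circ> u) = (h2 \<otimes>\<^bsub>BijGroup {..<n}\<^esub> h1) \<circ> u"
      using hB u by (simp add: BijGroup_mult_comp)
    finally show "compose (cantor n) g f (cat w u) =
        cat (q2 @ map h2 (drop M y)) ((h2 \<otimes>\<^bsub>BijGroup {..<n}\<^esub> h1) \<circ> u)" .
  qed
qed

lemma described_by_table_of_code:
  assumes ext: "f \<in> extensional (cantor n)" and W: "prefix_code n W" "W \<noteq> {}"
    and q: "inj_on q W" "prefix_code n (q ` W)" and \<sigma>\<tau>: "\<forall>w\<in>W. \<sigma> w \<in> H \<and> \<tau> w \<in> H"
    and rows: "\<forall>w\<in>W. \<forall>u\<in>cantor n. f (cat w (\<sigma> w \<circ> u)) = cat (q w) (\<tau> w \<circ> u)"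
  shows "described_by_table n H f"
proof -
  have "finite W"
    using W(1) by (simp add: prefix_code_def)
  then obtain e where "bij_betw e {..<card W} W"
    using ex_bij_betw_nat_finite by (fastforce simp: atLeast0LessThan)
  then have e: "inj_on e {..<card W}" "e ` {..<card W} = W"
    by (auto simp: bij_betw_def)
  show ?thesis
  proof (rule described_by_tableI[where p = e and q = "q \<circ> e" and \<sigma> = "\<sigma> \<circ> e" and \<tau> = "\<tau> \<circ> e"])
    show "card W \<ge> 1"
      using \<open>finite W\<close> W(2) by (simp add: Suc_leI card_gt_0_iff)
    show "inj_on (q \<circ> e) {..<card W}"
      using e q(1) by (simp add: comp_inj_on)
    show "prefix_code n (e ` {..<card W})"
      using e(2) W(1) by simp
    show "prefix_code n ((q \<circ> e) ` {..<card W})"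
      using e(2) q(2) by (metis image_comp)
    show "\<forall>i<card W. (\<sigma> \<circ> e) i \<in> H \<and> (\<tau> \<circ> e) i \<in> H"
      "\<forall>i<card W. \<forall>u\<in>cantor n. f (cat (e i) ((\<sigma> \<circ> e) i \<circ> u)) = cat ((q \<circ> e) i) ((\<tau> \<circ> e) i \<circ> u)"
      using e(2) \<sigma>\<tau> rows by auto
  qed (fact ext e(1))+
qed

text \<open>If q_w is a prefix of q_w', some point of the cylinder of w has the same image as a
  point of the cylinder of w'.\<close>

lemma table_at_depth_images_prefix_free:
  assumes n: "0 < n" and inj: "inj_on f (cantor n)" and H: "H \<subseteq> Bij {..<n}"
    and rows: "\<forall>w\<in>words_of_length n L. q w \<in> words n \<and> h w \<in> H \<and>
      (\<forall>u\<in>cantor n. f (cat w u) = cat (q w) (h w \<circ> u))"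
    and w: "w \<in> words_of_length n L" and w': "w' \<in> words_of_length n L"
    and x: "q w' = q w @ x"
  shows "w = w'"
proof -
  have hB: "h w \<in> Bij {..<n}" "h w' \<in> Bij {..<n}"
    using rows w w' H by auto
  have "x \<in> words n"
    using rows w' x by (metis words_append)
  define u' :: "nat \<Rightarrow> nat" where "u' = (\<lambda>_. 0)"
  have u': "u' \<in> cantor n"
    using n by (simp add: u'_def cantor_def)
  define c where "c = cat x (h w' \<circ> u')"
  have c: "c \<in> cantor n"
    unfolding c_def using \<open>x \<in> words n\<close> hB(2) u' by (simp add: cat_in_cantor Bij_comp_cantor)
  define v where "v = inv\<^bsub>BijGroup {..<n}\<^esub> h w \<circ> c"
  have v: "v \<in> cantor n"
    unfolding v_def using hB(1) c by (simp add: Bij_comp_cantor inv_BijGroup_closed)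
  have "f (cat w v) = cat (q w) (h w \<circ> v)"
    using rows w v by blast
  also have "\<dots> = cat (q w') (h w' \<circ> u')"
    using hB(1) c by (simp add: v_def c_def x BijGroup_comp_inv_comp cat_append)
  also have "\<dots> = f (cat w' u')"
    using rows w' u' by simp
  finally have "cat w v = cat w' u'"
    using inj w w' v u' by (auto simp: words_of_length_def cat_in_cantor dest: inj_onD)
  then show "w = w'"
    using w w' cat_eq_cat_iff by (simp add: words_of_length_def)
qed

lemma table_at_depth_images_prefix_code:
  assumes n: "0 < n" and fB: "f \<in> Bij (cantor n)" and H: "H \<subseteq> Bij {..<n}"
    and rows: "\<forall>w\<in>words_of_length n L. q w \<in> words n \<and> h w \<in> H \<and>
      (\<forall>u\<in>cantor n. f (cat w u) = cat (q w) (h w \<circ> u))"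
  shows "prefix_code n (q ` words_of_length n L)"
  unfolding prefix_code_def
proof (intro conjI ballI)
  let ?W = "words_of_length n L"
  have inj: "inj_on f (cantor n)" and surj: "f ` cantor n = cantor n"
    using fB by (auto simp: Bij_def bij_betw_def)
  show "finite (q ` ?W)"
    by (simp add: finite_words_of_length)
  show "q ` ?W \<subseteq> words n"
    using rows by auto
  fix z assume "z \<in> cantor n"
  then obtain y where y: "y \<in> cantor n" "z = f y"
    using surj by blast
  define w where "w = map y [0..<L]"
  have w: "w \<in> ?W"
    unfolding w_def using y(1) by (rule take_in_words_of_length)
  obtain t where "t \<in> cantor n" "y = cat w t"
    using is_prefix_take y(1) unfolding w_def by (rule is_prefixE)
  then have "is_prefix (q w) z"
    using rows w y(2) by simp
  show "\<exists>!s. s \<in> q ` ?W \<and> is_prefix s z"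
  proof (rule ex1I)
    show "q w \<in> q ` ?W \<and> is_prefix (q w) z"
      using w \<open>is_prefix (q w) z\<close> by blast
    fix s assume "s \<in> q ` ?W \<and> is_prefix s z"
    then obtain w' where w': "w' \<in> ?W" "s = q w'" "is_prefix (q w') z"
      by blast
    have "w = w'"
      using is_prefix_comparable[OF \<open>is_prefix (q w) z\<close> w'(3)]
        table_at_depth_images_prefix_free[OF n inj H rows] w w'(1) by metis
    then show "s = q w"
      using w'(2) by simp
  qed
qed

lemma table_at_depth_imp_described_by_table:
  assumes n: "0 < n" and H: "subgroup H (BijGroup {..<n})" and fB: "f \<in> Bij (cantor n)"
    and f: "table_at_depth n H f L"
  shows "described_by_table n H f"
proof -
  let ?W = "words_of_length n L" and ?one = "\<one>\<^bsub>BijGroup {..<n}\<^esub>"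
  have HB: "H \<subseteq> Bij {..<n}"
    using H by (rule subgroup_BijGroup_subset)
  obtain q h where rows: "\<forall>w\<in>?W. q w \<in> words n \<and> h w \<in> H \<and>
      (\<forall>u\<in>cantor n. f (cat w u) = cat (q w) (h w \<circ> u))"
    using f unfolding table_at_depth_def by metis
  have "inj_on q ?W"
  proof (rule inj_onI)
    fix w w' assume "w \<in> ?W" "w' \<in> ?W" "q w = q w'"
    moreover have "inj_on f (cantor n)"
      using fB by (simp add: Bij_def bij_betw_def)
    ultimately show "w = w'"
      using table_at_depth_images_prefix_free[OF n _ HB rows, of w w' "[]"] by simp
  qed
  moreover have "replicate L 0 \<in> ?W"
    using n by (auto simp: words_of_length_def words_def)
  moreover have "?one \<in> H"
    using H by (rule subgroup.one_closed)
  moreover have "\<forall>w\<in>?W. \<forall>u\<in>cantor n. f (cat w (?one \<circ> u)) = cat (q w) (h w \<circ> u)"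
    using rows by (simp add: BijGroup_one_comp)
  ultimately show ?thesis
    using fB rows prefix_code_words_of_length table_at_depth_images_prefix_code[OF n fB HB rows]
    by (intro described_by_table_of_code[where \<sigma> = "\<lambda>_. ?one" and \<tau> = h]) (auto simp: Bij_def)
qed

lemma V_eq_table_at_depth:
  assumes "0 < n" and "subgroup H (BijGroup {..<n})"
  shows "V n H = {f \<in> Bij (cantor n). \<exists>L. table_at_depth n H f L}"
  using assms described_by_table_Bij described_by_table_at_depth table_at_depth_imp_described_by_table
  by (auto simp: V_def)

theorem mainTheorem4:
  fixes n :: nat and H :: "(nat \<Rightarrow> nat) set"
  assumes "n \<ge> 2"
    and "subgroup H (BijGroup {..<n})"
  shows "subgroup (V n H) (BijGroup (cantor n))"
proof (rule subgroup.intro)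
  have n: "0 < n"
    using assms(1) by simp
  note V = V_eq_table_at_depth[OF n assms(2)]
  show "V n H \<subseteq> carrier (BijGroup (cantor n))"
    by (auto simp: V)
  show "x \<otimes>\<^bsub>BijGroup (cantor n)\<^esub> y \<in> V n H" if xy: "x \<in> V n H" "y \<in> V n H" for x y
  proof -
    obtain L M where "table_at_depth n H y L" "table_at_depth n H x M"
      using xy unfolding V by blast
    then have "table_at_depth n H (compose (cantor n) x y) (L + M)"
      by (rule table_at_depth_compose[OF assms(2)])
    then show ?thesis
      using xy by (auto simp: V BijGroup_mult compose_Bij)
  qed
  show "\<one>\<^bsub>BijGroup (cantor n)\<^esub> \<in> V n H"
    using table_at_depth_id[OF assms(2)] by (auto simp: V BijGroup_one id_Bij)
  show "inv\<^bsub>BijGroup (cantor n)\<^esub> x \<in> V n H" if x: "x \<in> V n H" for x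
  proof -
    have "x \<in> Bij (cantor n)" "described_by_table n H x"
      using x by (auto simp: V_def intro: described_by_table_Bij[OF assms(2)])
    then show ?thesis
      using described_by_table_inverse[OF subgroup_BijGroup_subset[OF assms(2)]]
      by (simp add: V_def inv_BijGroup)
  qed
qed

end
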